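(* Let $T\in\mathbb{T}$ have a positive weight on each edge, with adjacency matrix $A$. Then the smallest positive eigenvalue $\tau(T)$ of $A$ is simple, and there exists an eigenvector of $A$ corresponding to $\tau(T)$ all of whose entries are nonzero.
   Context: $\mathbb{T}$ is the class of simple undirected weighted trees $T$ such that (i) $T$ has at least one non-pendant vertex, and (ii) every non-pendant vertex of $T$ is adjacent to at least one pendant vertex (a vertex of degree one). The adjacency matrix $A$ has $(i,j)$ entry equal to the weight of edge $v_iv_j$, or $0$ if no edge. *)

theory Defs
  imports "Jordan_Normal_Form.Char_Poly"
begin

definition simple_graph :: "nat \<Rightarrow> (nat \<Rightarrow> nat \<Rightarrow> bool) \<Rightarrow> bool" where
  "simple_graph n E \<longleftrightarrow> (\<forall>i j. E i j \<longrightarrow> i < n \<and> j < n) \<and>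
     (\<forall>i j. E i j \<longleftrightarrow> E j i) \<and> (\<forall>i. \<not> E i i)"

definition graph_connected :: "nat \<Rightarrow> (nat \<Rightarrow> nat \<Rightarrow> bool) \<Rightarrow> bool" where
  "graph_connected n E \<longleftrightarrow> (\<forall>i<n. \<forall>j<n. E\<^sup>*\<^sup>* i j)"

definition is_cycle :: "(nat \<Rightarrow> nat \<Rightarrow> bool) \<Rightarrow> nat list \<Rightarrow> bool" where
  "is_cycle E vs \<longleftrightarrow> length vs \<ge> 3 \<and> distinct vs \<and>
     (\<forall>k. Suc k < length vs \<longrightarrow> E (vs ! k) (vs ! Suc k)) \<and> E (last vs) (hd vs)"

definition is_tree :: "nat \<Rightarrow> (nat \<Rightarrow> nat \<Rightarrow> bool) \<Rightarrow> bool" where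
  "is_tree n E \<longleftrightarrow> n \<ge> 1 \<and> simple_graph n E \<and> graph_connected n E \<and> (\<nexists>vs. is_cycle E vs)"

definition degree :: "nat \<Rightarrow> (nat \<Rightarrow> nat \<Rightarrow> bool) \<Rightarrow> nat \<Rightarrow> nat" where
  "degree n E i = card {j. j < n \<and> E i j}"

definition pendant :: "nat \<Rightarrow> (nat \<Rightarrow> nat \<Rightarrow> bool) \<Rightarrow> nat \<Rightarrow> bool" where
  "pendant n E i \<longleftrightarrow> degree n E i = 1"

definition class_T :: "nat \<Rightarrow> (nat \<Rightarrow> nat \<Rightarrow> bool) \<Rightarrow> bool" where
  "class_T n E \<longleftrightarrow> is_tree n E \<and> (\<exists>i<n. \<not> pendant n E i) \<and>
     (\<forall>i<n. \<not> pendant n E i \<longrightarrow> (\<exists>j<n. E i j \<and> pendant n E j))"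

definition adj_matrix :: "nat \<Rightarrow> (nat \<Rightarrow> nat \<Rightarrow> bool) \<Rightarrow> (nat \<Rightarrow> nat \<Rightarrow> real) \<Rightarrow> real mat" where
  "adj_matrix n E w = mat n n (\<lambda>(i, j). if E i j then w i j else 0)"

end

(*
  The adjacency matrix A of a tree T in class T is symmetric, so it is diagonalisable with real
  spectrum, and algebraic and geometric multiplicities agree. Because every non-pendant vertex
  carries a leaf, A has an explicit pseudo-inverse C, built from the leaves and their parents,
  with C x = x / lambda for every eigenvector x of A for lambda (and C x = 0 when lambda = 0).
  Hence 1 / tau is the largest eigenvalue of C, i.e. (1 / tau) I - C is positive semidefinite.
  Signing a leaf like its parent and the non-pendant vertices by a bipartition of the tree makes
  C entrywise nonnegative and positive along a connected pattern, so a Perron-Frobenius argument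
  shows that every eigenvector of A for tau is nowhere zero. Two such eigenvectors are then
  proportional (compare them at one vertex), so tau is simple. A positive eigenvalue exists
  because A is nonzero and the spectrum of a bipartite graph is symmetric about 0.
*)

theory Submission
  imports Defs Jordan_Normal_Form.Jordan_Normal_Form_Uniqueness
    Jordan_Normal_Form.Jordan_Normal_Form_Existence
begin

hide_const (open) Coset.order

section \<open>Symmetric matrices and their eigenvectors\<close>

lemma index_mult_mat_vec_sum:
  "A \<in> carrier_mat n m \<Longrightarrow> v \<in> carrier_vec m \<Longrightarrow> i < n \<Longrightarrow>
    (A *\<^sub>v v) $ i = (\<Sum>j<m. A $$ (i,j) * v $ j)"
  by (auto simp: scalar_prod_def atLeast0LessThan intro!: sum.cong)

lemma scalar_prod_mult_mat_vec_sum: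
  fixes A :: "'a :: comm_semiring_0 mat"
  shows "A \<in> carrier_mat n n \<Longrightarrow> y \<in> carrier_vec n \<Longrightarrow>
    y \<bullet> (A *\<^sub>v y) = (\<Sum>i<n. \<Sum>j<n. A $$ (i,j) * (y $ i * y $ j))"
  by (auto simp: scalar_prod_def atLeast0LessThan index_mult_mat_vec_sum sum_distrib_left
      intro!: sum.cong) (simp add: algebra_simps)

lemma real_scalar_prod_self_eq_0_iff:
  fixes v :: "real vec"
  assumes "v \<in> carrier_vec n"
  shows "v \<bullet> v = 0 \<longleftrightarrow> v = 0\<^sub>v n"
proof -
  have "conjugate v = v" by (rule eq_vecI) (simp_all add: conjugate_real_def)
  with conjugate_square_eq_0_vec[OF assms] show ?thesis by simp
qed

lemma smult_one_minus_mult_mat_vec: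
  fixes C :: "'a :: comm_ring_1 mat"
  assumes C: "C \<in> carrier_mat n n" and y: "y \<in> carrier_vec n"
  shows "(\<rho> \<cdot>\<^sub>m 1\<^sub>m n - C) *\<^sub>v y = \<rho> \<cdot>\<^sub>v y - C *\<^sub>v y"
proof -
  have "(\<rho> \<cdot>\<^sub>m 1\<^sub>m n) *\<^sub>v y = \<rho> \<cdot>\<^sub>v y"
    using y
    by (intro eq_vecI) (auto simp: index_mult_mat_vec_sum[of _ n n] if_distrib cong: if_cong)
  then show ?thesis using C y by (simp add: minus_mult_distrib_mat_vec[of _ n n])
qed

lemma mult_eq_mult_mat_diag_iff:
  fixes M :: "'a :: comm_ring_1 mat"
  assumes M: "M \<in> carrier_mat n n" and P: "P \<in> carrier_mat n n"
  shows "M * P = P * mat_diag n g \<longleftrightarrow> (\<forall>i<n. M *\<^sub>v col P i = g i \<cdot>\<^sub>v col P i)"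
proof -
  have entries: "(M * P) $$ (k,i) = (M *\<^sub>v col P i) $ k"
    "(P * mat_diag n g) $$ (k,i) = (g i \<cdot>\<^sub>v col P i) $ k" if "k < n" "i < n" for k i
    using that M P by (simp_all add: mat_diag_mult_right[OF P] mult.commute)
  show ?thesis
  proof
    assume "M * P = P * mat_diag n g"
    then show "\<forall>i<n. M *\<^sub>v col P i = g i \<cdot>\<^sub>v col P i"
      using M P entries by (auto intro!: eq_vecI)
  next
    assume cols: "\<forall>i<n. M *\<^sub>v col P i = g i \<cdot>\<^sub>v col P i"
    show "M * P = P * mat_diag n g"
    proof (rule eq_matI)
      fix k i assume "k < dim_row (P * mat_diag n g)" "i < dim_col (P * mat_diag n g)"
      then have "k < n" "i < n" using P by (auto simp: mat_diag_def)
      then show "(M * P) $$ (k,i) = (P * mat_diag n g) $$ (k,i)" using entries cols by simp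
    qed (use M P in \<open>auto simp: mat_diag_def\<close>)
  qed
qed

lemma finite_eigenvalues:
  fixes A :: "'a :: field mat"
  assumes A: "A \<in> carrier_mat n n"
  shows "finite {\<mu>. eigenvalue A \<mu>}"
proof -
  have "char_poly A \<noteq> 0" using degree_monic_char_poly[OF A] by auto
  then have "finite {\<mu>. poly (char_poly A) \<mu> = 0}" by (rule poly_roots_finite)
  then show ?thesis by (simp add: eigenvalue_root_char_poly[OF A])
qed

lemma kernel_dim_char_matrix_le_1:
  fixes A :: "'a :: field mat"
  assumes A: "A \<in> carrier_mat n n" and v: "eigenvector A v e" and i: "i < n"
    and nonzero: "\<And>x. eigenvector A x e \<Longrightarrow> x $ i \<noteq> 0"
  shows "kernel_dim (char_matrix A e) \<le> 1"
proof -
  define M where "M = char_matrix A e"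
  have M: "M \<in> carrier_mat n n" unfolding M_def using A by simp
  interpret K: kernel n n M by unfold_locales (rule M)
  have kernel_iff: "u \<in> mat_kernel M \<longleftrightarrow> u \<in> carrier_vec n \<and> M *\<^sub>v u = 0\<^sub>v n" for u
    using mat_kernel[OF M] by simp
  have eigenvector_iff: "eigenvector A u e \<longleftrightarrow> u \<in> mat_kernel M \<and> u \<noteq> 0\<^sub>v n" for u
    using eigenvector_char_matrix[OF A] kernel_iff unfolding M_def by blast
  have vK: "v \<in> mat_kernel M" using v eigenvector_iff by blast
  have "mat_kernel M \<subseteq> K.span {v}"
  proof
    fix u assume uK: "u \<in> mat_kernel M"
    define c where "c = u $ i / v $ i"
    have "u - c \<cdot>\<^sub>v v \<in> mat_kernel M"
      using uK vK M by (simp add: kernel_iff mult_minus_distrib_mat_vec mult_mat_vec)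
    moreover have "(u - c \<cdot>\<^sub>v v) $ i = 0"
      using nonzero[OF v] uK vK i by (auto simp: kernel_iff c_def)
    ultimately have diff: "u - c \<cdot>\<^sub>v v = 0\<^sub>v n" using nonzero eigenvector_iff by blast
    have "u $ j = (c \<cdot>\<^sub>v v) $ j" if "j < n" for j
      using arg_cong[OF diff, of "\<lambda>z. z $ j"] that uK vK by (auto simp: kernel_iff)
    then have "u = c \<cdot>\<^sub>v v" using uK vK by (intro eq_vecI) (auto simp: kernel_iff)
    moreover have "submodule class_ring (K.span {v}) K.VK"
      by (rule K.Ker.span_is_submodule) (use vK in simp)
    moreover have "v \<in> K.span {v}" using K.Ker.in_own_span[of "{v}"] vK by auto
    ultimately show "u \<in> K.span {v}"
      using submodule.smult_closed[of class_ring "K.span {v}" K.VK c v] by simp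
  qed
  moreover have "K.span {v} \<subseteq> mat_kernel M"
    using K.Ker.span_is_subset2[of "{v}"] vK by simp
  ultimately have "K.span {v} = mat_kernel M" by blast
  then have "K.dim \<le> 1" using K.Ker.dim_le1I vK by simp
  then show ?thesis unfolding M_def[symmetric] by simp
qed

definition sym_mat :: "nat \<Rightarrow> 'a mat \<Rightarrow> bool" where
  "sym_mat n A \<longleftrightarrow> A \<in> carrier_mat n n \<and> (\<forall>i<n. \<forall>j<n. A $$ (i,j) = A $$ (j,i))"

lemma sym_mat_carrier: "sym_mat n A \<Longrightarrow> A \<in> carrier_mat n n"
  by (simp add: sym_mat_def)

lemma sym_mat_index: "sym_mat n A \<Longrightarrow> i < n \<Longrightarrow> j < n \<Longrightarrow> A $$ (i,j) = A $$ (j,i)"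
  by (simp add: sym_mat_def)

lemma sym_mat_transpose: "sym_mat n A \<Longrightarrow> transpose_mat A = A"
  by (rule eq_matI) (auto simp: sym_mat_def)

lemma sym_mat_smult_one_minus:
  assumes S: "sym_mat n C"
  shows "sym_mat n (\<rho> \<cdot>\<^sub>m 1\<^sub>m n - C)"
  unfolding sym_mat_def
proof (intro conjI allI impI)
  show "\<rho> \<cdot>\<^sub>m 1\<^sub>m n - C \<in> carrier_mat n n" by (rule minus_carrier_mat[OF sym_mat_carrier[OF S]])
  fix i j assume ij: "i < n" "j < n"
  have "C $$ (i,j) = C $$ (j,i)" by (rule sym_mat_index[OF S ij])
  with ij show "(\<rho> \<cdot>\<^sub>m 1\<^sub>m n - C) $$ (i,j) = (\<rho> \<cdot>\<^sub>m 1\<^sub>m n - C) $$ (j,i)"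
    using sym_mat_carrier[OF S] by simp
qed

lemma sym_mat_complex_eigenvalue_real:
  fixes A :: "real mat"
  assumes S: "sym_mat n A"
    and ev: "eigenvalue (map_mat complex_of_real A) a"
  shows "Im a = 0"
proof -
  have A: "A \<in> carrier_mat n n" using S by (rule sym_mat_carrier)
  let ?Ac = "map_mat complex_of_real A"
  have Ac: "?Ac \<in> carrier_mat n n" using A by simp
  from ev obtain u where u: "eigenvector ?Ac u a" unfolding eigenvalue_def by auto
  hence uc: "u \<in> carrier_vec n" and un: "u \<noteq> 0\<^sub>v n" and eq: "?Ac *\<^sub>v u = a \<cdot>\<^sub>v u"
    using Ac unfolding eigenvector_def by auto
  have rows: "(\<Sum>j<n. complex_of_real (A $$ (i,j)) * u $ j) = a * u $ i" if "i < n" for i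
  proof -
    have "(?Ac *\<^sub>v u) $ i = (a \<cdot>\<^sub>v u) $ i" using eq by simp
    thus ?thesis using index_mult_mat_vec_sum[OF Ac uc that] that A uc by simp
  qed
  define s where "s = (\<Sum>i<n. cnj (u $ i) * (\<Sum>j<n. complex_of_real (A $$ (i,j)) * u $ j))"
  define N where "N = (\<Sum>i<n. cnj (u $ i) * u $ i)"
  have s_eq: "s = a * N" unfolding s_def N_def
    by (auto simp: rows sum_distrib_left intro!: sum.cong)
  have "cnj s = (\<Sum>i<n. \<Sum>j<n. cnj (u $ j) * complex_of_real (A $$ (j,i)) * u $ i)"
    unfolding s_def
    by (auto simp: sum_distrib_left sym_mat_index[OF S] mult_ac intro!: sum.cong)
  also have "\<dots> = s"
    by (subst sum.swap) (simp only: s_def sum_distrib_left mult.assoc)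
  finally have s_real: "cnj s = s" .
  have N_real: "N = complex_of_real (\<Sum>i<n. (cmod (u $ i))^2)"
    unfolding N_def of_real_sum by (intro sum.cong refl) (metis complex_norm_square mult.commute)
  obtain k where k: "k < n" "u $ k \<noteq> 0"
    using un uc by (metis eq_vecI carrier_vecD index_zero_vec)
  have "(cmod (u $ k))^2 \<le> (\<Sum>i<n. (cmod (u $ i))^2)"
    by (rule member_le_sum) (use k in auto)
  moreover have "(cmod (u $ k))^2 > 0" using k by simp
  ultimately have "N \<noteq> 0" unfolding N_real by (metis not_less of_real_eq_0_iff)
  moreover have "cnj a * N = a * N"
    using s_eq s_real N_real by (metis complex_cnj_complex_of_real complex_cnj_mult)
  ultimately have "cnj a = a" by simp
  thus ?thesis by (metis Reals_cnj_iff complex_is_Real_iff)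
qed

lemma sym_mat_char_poly_splits:
  fixes A :: "real mat"
  assumes S: "sym_mat n A"
  shows "\<exists>es. char_poly A = (\<Prod>a\<leftarrow>es. [:-a,1:])"
proof -
  have A: "A \<in> carrier_mat n n" using S by (rule sym_mat_carrier)
  let ?Ac = "map_mat complex_of_real A"
  have Ac: "?Ac \<in> carrier_mat n n" using A by simp
  obtain as where as: "char_poly ?Ac = (\<Prod>a\<leftarrow>as. [:-a,1:])"
    using char_poly_factorized[OF Ac] by auto
  have real_roots: "complex_of_real (Re a) = a" if "a \<in> set as" for a
  proof -
    have "poly (char_poly ?Ac) a = 0" unfolding as using that by (rule linear_poly_root)
    hence "eigenvalue ?Ac a" using eigenvalue_root_char_poly[OF Ac] by simp
    hence "Im a = 0" by (rule sym_mat_complex_eigenvalue_real[OF S])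
    thus ?thesis by (simp add: complex_eq_iff)
  qed
  interpret mp: map_poly_inj_comm_ring_hom complex_of_real ..
  have "map_poly complex_of_real (\<Prod>a\<leftarrow>map Re as. [:-a,1:]) = (\<Prod>a\<leftarrow>as. [:-a,1:])"
    using real_roots
  proof (induct as)
    case (Cons a as)
    then show ?case by (simp only: list.map prod_list.Cons mp.hom_mult) simp
  qed simp
  also have "\<dots> = map_poly complex_of_real (char_poly A)"
    using as of_real_hom.char_poly_hom[OF A] by metis
  finally have "char_poly A = (\<Prod>a\<leftarrow>map Re as. [:-a,1:])"
    using mp.injectivity by metis
  thus ?thesis by blast
qed

lemma sym_mat_jordan_nf_exists:
  fixes A :: "real mat"
  assumes "sym_mat n A"
  shows "\<exists>n_as. jordan_nf A n_as"
  using sym_mat_char_poly_splits[OF assms] jordan_nf_exists[OF sym_mat_carrier[OF assms]] by blast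

lemma sym_mat_mat_kernel_square:
  fixes M :: "real mat"
  assumes S: "sym_mat n M"
  shows "mat_kernel (M * M) = mat_kernel M"
proof -
  have M: "M \<in> carrier_mat n n" using S by (rule sym_mat_carrier)
  have "M *\<^sub>v v = 0\<^sub>v n" if v: "v \<in> carrier_vec n" and MMv: "M *\<^sub>v (M *\<^sub>v v) = 0\<^sub>v n" for v
  proof -
    have "(M *\<^sub>v v) \<bullet> (M *\<^sub>v v) = (transpose_mat M *\<^sub>v (M *\<^sub>v v)) \<bullet> v"
      using transpose_vec_mult_scalar[OF M v, of "M *\<^sub>v v"] M v by simp
    also have "\<dots> = 0" using MMv v by (simp add: sym_mat_transpose[OF S])
    finally show ?thesis using real_scalar_prod_self_eq_0_iff[of "M *\<^sub>v v" n] M v by simp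
  qed
  moreover have "M *\<^sub>v (M *\<^sub>v v) = 0\<^sub>v n" if "M *\<^sub>v v = 0\<^sub>v n" for v
    using that M by (auto intro!: eq_vecI simp: index_mult_mat_vec_sum)
  ultimately show ?thesis
    using M by (auto simp: mat_kernel_def assoc_mult_mat_vec[OF M M])
qed

lemma sym_mat_dim_gen_eigenspace_2:
  fixes A :: "real mat"
  assumes S: "sym_mat n A"
  shows "dim_gen_eigenspace A e 2 = dim_gen_eigenspace A e 1"
proof -
  have M: "char_matrix A e \<in> carrier_mat n n"
    using sym_mat_carrier[OF S] by simp
  have "sym_mat n (char_matrix A e)"
    using S unfolding sym_mat_def char_matrix_def by auto
  then show ?thesis
    unfolding dim_gen_eigenspace_def kernel_dim_def numeral_2_eq_2 using M
    by (simp add: sym_mat_mat_kernel_square)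
qed

lemma sum_list_map_le_eq:
  fixes f g :: "'a \<Rightarrow> nat"
  assumes "sum_list (map f xs) = sum_list (map g xs)" and "\<And>x. x \<in> set xs \<Longrightarrow> f x \<le> g x"
    and "x \<in> set xs"
  shows "f x = g x"
  using assms
proof (induct xs)
  case (Cons a xs)
  have "f a \<le> g a" and "sum_list (map f xs) \<le> sum_list (map g xs)"
    using Cons.prems(2) by (auto intro: sum_list_mono)
  with Cons.prems(1) have "f a = g a" and "sum_list (map f xs) = sum_list (map g xs)"
    by simp_all
  with Cons show ?case by auto
qed simp

lemma sym_mat_jordan_blocks_size_one:
  fixes A :: "real mat"
  assumes S: "sym_mat n A" and J: "jordan_nf A n_as" and de: "(d,e) \<in> set n_as"
  shows "d = 1"
proof -
  let ?ds = "map fst [(d', e')\<leftarrow>n_as. e' = e]"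
  have "d \<noteq> 0" using J de unfolding jordan_nf_def by force
  moreover have "sum_list (map (min 1) ?ds) = sum_list (map (min 2) ?ds)"
    using sym_mat_dim_gen_eigenspace_2[OF S, of e] unfolding dim_gen_eigenspace[OF J] by simp
  then have "min 1 d = min 2 d"
    by (rule sum_list_map_le_eq) (use de in force)+
  ultimately show "d = 1" by simp
qed

lemma jordan_matrix_blocks_size_one:
  assumes "\<forall>(d,e) \<in> set n_as. d = 1"
  shows "jordan_matrix n_as = mat_diag (length n_as) (\<lambda>i. snd (n_as ! i))"
  using assms
proof (induct n_as)
  case Nil
  show ?case by (rule eq_matI) (auto simp: jordan_matrix_def mat_diag_def)
next
  case (Cons de n_as)
  obtain e where de: "de = (1, e)" using Cons.prems by (cases de) auto
  have "sum_list (map fst n_as) = length n_as"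
    using Cons.prems by (induct n_as) auto
  with Cons show ?case
    unfolding de jordan_matrix_Cons
    by (intro eq_matI) (auto simp: mat_diag_def nth_Cons' jordan_block_def)
qed

lemma sym_mat_order_char_poly:
  fixes A :: "real mat"
  assumes S: "sym_mat n A"
  shows "order e (char_poly A) = kernel_dim (char_matrix A e)"
proof -
  obtain n_as where J: "jordan_nf A n_as" using sym_mat_jordan_nf_exists[OF S] by blast
  have "\<forall>(d,e) \<in> set n_as. d = 1" using sym_mat_jordan_blocks_size_one[OF S J] by blast
  then have "order e (char_poly A) = sum_list (map (min 1) (map fst [(d, e')\<leftarrow>n_as. e' = e]))"
    unfolding jordan_nf_order[OF J] by (induct n_as) auto
  also have "\<dots> = kernel_dim (char_matrix A e)"
    using dim_gen_eigenspace[OF J, of e 1] sym_mat_carrier[OF S]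
    by (simp add: dim_gen_eigenspace_def)
  finally show ?thesis .
qed

lemma sym_mat_simple_eigenvalue:
  fixes A :: "real mat"
  assumes S: "sym_mat n A" and v: "eigenvector A v e" and i: "i < n"
    and nonzero: "\<And>x. eigenvector A x e \<Longrightarrow> x $ i \<noteq> 0"
  shows "order e (char_poly A) = 1"
proof -
  have A: "A \<in> carrier_mat n n" using S by (rule sym_mat_carrier)
  have "order e (char_poly A) \<le> 1"
    unfolding sym_mat_order_char_poly[OF S] by (rule kernel_dim_char_matrix_le_1[OF A v i nonzero])
  moreover have "poly (char_poly A) e = 0"
    using v eigenvalue_root_char_poly[OF A] unfolding eigenvalue_def by blast
  moreover have "char_poly A \<noteq> 0" using degree_monic_char_poly[OF A] by auto
  ultimately show ?thesis using order_root by (metis le_antisym less_one not_le)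
qed

lemma sym_mat_diagonalizable:
  fixes A :: "real mat"
  assumes S: "sym_mat n A"
  obtains P Q g where "P \<in> carrier_mat n n" "Q \<in> carrier_mat n n" "P * Q = 1\<^sub>m n"
    "A * P = P * mat_diag n g" "\<And>i. i < n \<Longrightarrow> eigenvalue A (g i)"
proof -
  have A: "A \<in> carrier_mat n n" using S by (rule sym_mat_carrier)
  obtain n_as where J: "jordan_nf A n_as" using sym_mat_jordan_nf_exists[OF S] by blast
  define g where "g i = snd (n_as ! i)" for i
  have ones: "\<forall>(d,e) \<in> set n_as. d = 1" using sym_mat_jordan_blocks_size_one[OF S J] by blast
  then have JM: "jordan_matrix n_as = mat_diag (length n_as) g"
    unfolding g_def by (rule jordan_matrix_blocks_size_one)
  from J obtain P Q where "similar_mat_wit A (jordan_matrix n_as) P Q"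
    unfolding jordan_nf_def similar_mat_def by blast
  note W = similar_mat_witD2[OF A this, unfolded JM]
  have len: "length n_as = n" using W(5) unfolding mat_diag_def by auto
  note W = W[unfolded len]
  have D: "mat_diag n g \<in> carrier_mat n n" by simp
  have "A * P = P * mat_diag n g * (Q * P)"
    unfolding W(3) using W(6,7) D by (simp add: assoc_mult_mat[of "P * mat_diag n g" n n Q n P n])
  also have "\<dots> = P * mat_diag n g" using W(2,6) D by (simp add: right_mult_one_mat[of _ n n])
  finally have AP: "A * P = P * mat_diag n g" .
  have "eigenvalue A (g i)" if i: "i < n" for i
  proof -
    have "(1, g i) \<in> set n_as" using i len ones unfolding g_def
      by (metis (mono_tags, lifting) case_prodD nth_mem prod.collapse)
    then have "poly (char_poly A) (g i) = 0"
      unfolding jordan_nf_char_poly[OF J] poly_prod_list_zero_iff by force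
    thus ?thesis using eigenvalue_root_char_poly[OF A] by simp
  qed
  with W AP show ?thesis using that by blast
qed

lemma sym_mat_nonzero_eigenvalue:
  fixes A :: "real mat"
  assumes S: "sym_mat n A" and nonzero: "A \<noteq> 0\<^sub>m n n"
  shows "\<exists>\<mu>. eigenvalue A \<mu> \<and> \<mu> \<noteq> 0"
proof (rule ccontr)
  assume "\<not> (\<exists>\<mu>. eigenvalue A \<mu> \<and> \<mu> \<noteq> 0)"
  then have zero: "eigenvalue A \<mu> \<Longrightarrow> \<mu> = 0" for \<mu> by blast
  have A: "A \<in> carrier_mat n n" using S by (rule sym_mat_carrier)
  obtain P Q g where P: "P \<in> carrier_mat n n" and Q: "Q \<in> carrier_mat n n" and PQ: "P * Q = 1\<^sub>m n"
    and AP: "A * P = P * mat_diag n g" and eigenvalues: "\<And>i. i < n \<Longrightarrow> eigenvalue A (g i)"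
    using sym_mat_diagonalizable[OF S] by blast
  have "mat_diag n g = 0\<^sub>m n n"
    by (rule eq_matI) (auto simp: mat_diag_def zero[OF eigenvalues])
  then have "A * P = 0\<^sub>m n n" using AP P by simp
  then have "A * P * Q = 0\<^sub>m n n" using Q by simp
  then show False using A P Q PQ nonzero by (simp add: assoc_mult_mat[of A n n P n Q n])
qed

section \<open>Positive semidefinite matrices\<close>

definition psd_mat :: "nat \<Rightarrow> real mat \<Rightarrow> bool" where
  "psd_mat n X \<longleftrightarrow> (\<forall>y \<in> carrier_vec n. y \<bullet> (X *\<^sub>v y) \<ge> 0)"

lemma sym_mat_scalar_prod_mult_mat_vec_commute:
  fixes X :: "'a :: comm_semiring_0 mat"
  assumes S: "sym_mat n X" and v: "v \<in> carrier_vec n" and w: "w \<in> carrier_vec n"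
  shows "v \<bullet> (X *\<^sub>v w) = w \<bullet> (X *\<^sub>v v)"
proof -
  have X: "X \<in> carrier_mat n n" using S by (rule sym_mat_carrier)
  have "v \<bullet> (X *\<^sub>v w) = (transpose_mat X *\<^sub>v v) \<bullet> w"
    using transpose_vec_mult_scalar[OF X w v] by simp
  also have "\<dots> = w \<bullet> (X *\<^sub>v v)"
    using X v w by (simp add: sym_mat_transpose[OF S] comm_scalar_prod[of _ n])
  finally show ?thesis .
qed

lemma nonneg_quadratic_imp_linear_coeff_zero:
  fixes s b :: real
  assumes nonneg: "\<And>t. 0 \<le> t * s + t\<^sup>2 * b"
  shows "s = 0"
proof (rule ccontr)
  assume "s \<noteq> 0"
  define c where "c = \<bar>b\<bar> + 1"
  define t where "t = - s / (2 * c)"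
  have c: "c > 0" unfolding c_def by simp
  have "t * s + t\<^sup>2 * b \<le> t * s + t\<^sup>2 * c"
    unfolding c_def by (intro add_left_mono mult_left_mono) simp_all
  also have "\<dots> = - s\<^sup>2 / (4 * c)"
    unfolding t_def using c by (simp add: field_simps power2_eq_square)
  also have "\<dots> < 0" using \<open>s \<noteq> 0\<close> c by simp
  finally show False using nonneg[of t] by simp
qed

lemma psd_mat_quadratic_form_zero:
  fixes X :: "real mat"
  assumes S: "sym_mat n X" and psd: "psd_mat n X"
    and x: "x \<in> carrier_vec n" and zero: "x \<bullet> (X *\<^sub>v x) \<le> 0"
  shows "X *\<^sub>v x = 0\<^sub>v n"
proof -
  have X: "X \<in> carrier_mat n n" using S by (rule sym_mat_carrier)
  define u where "u = X *\<^sub>v x"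
  have u: "u \<in> carrier_vec n" unfolding u_def using X x by simp
  have "x \<bullet> (X *\<^sub>v x) = 0" using zero psd x unfolding psd_mat_def by force
  have "0 \<le> t * (2 * (u \<bullet> u)) + t\<^sup>2 * (u \<bullet> (X *\<^sub>v u))" for t
  proof -
    have "x \<bullet> (X *\<^sub>v u) = u \<bullet> u"
      using sym_mat_scalar_prod_mult_mat_vec_commute[OF S x u] unfolding u_def .
    moreover have "(x + t \<cdot>\<^sub>v u) \<bullet> (X *\<^sub>v (x + t \<cdot>\<^sub>v u)) =
        x \<bullet> (X *\<^sub>v x) + t * (x \<bullet> (X *\<^sub>v u)) + t * (u \<bullet> (X *\<^sub>v x)) + t\<^sup>2 * (u \<bullet> (X *\<^sub>v u))"
      using X x u
      by (simp add: mult_add_distrib_mat_vec[of X n n] mult_mat_vec[of X n n]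
          add_scalar_prod_distrib[of _ n] scalar_prod_add_distrib[of _ n] power2_eq_square
          algebra_simps)
    moreover have "0 \<le> (x + t \<cdot>\<^sub>v u) \<bullet> (X *\<^sub>v (x + t \<cdot>\<^sub>v u))"
      using psd x u unfolding psd_mat_def by simp
    ultimately show ?thesis using \<open>x \<bullet> (X *\<^sub>v x) = 0\<close> unfolding u_def by (simp add: algebra_simps)
  qed
  then have "u \<bullet> u = 0"
    by (metis nonneg_quadratic_imp_linear_coeff_zero mult_eq_0_iff zero_neq_numeral)
  then show ?thesis using real_scalar_prod_self_eq_0_iff[OF u] unfolding u_def by simp
qed

text \<open>The eigenbasis \<open>P\<close> need not be orthogonal: since \<open>X\<close> is symmetric, the Gram matrix
  \<open>G = P\<^sup>T P\<close> still satisfies \<open>G i j * h j = h i * G i j\<close>, which allows \<open>h\<close> to be split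
  as \<open>sqrt (h i) * sqrt (h j)\<close> inside the form.\<close>

lemma quadratic_form_eigenbasis_nonneg:
  fixes X P :: "nat \<Rightarrow> nat \<Rightarrow> real" and h c :: "nat \<Rightarrow> real"
  assumes symX: "\<And>k l. k < n \<Longrightarrow> l < n \<Longrightarrow> X k l = X l k"
    and XP: "\<And>k j. k < n \<Longrightarrow> j < n \<Longrightarrow> (\<Sum>l<n. X k l * P l j) = P k j * h j"
    and h: "\<And>j. j < n \<Longrightarrow> h j \<ge> 0"
  shows "(\<Sum>k<n. (\<Sum>i<n. P k i * c i) * (\<Sum>l<n. X k l * (\<Sum>j<n. P l j * c j))) \<ge> 0"
proof -
  define G where "G i j = (\<Sum>k<n. P k i * P k j)" for i j
  have bilinear: "(\<Sum>k<n. (\<Sum>i<n. P k i * a i) * (\<Sum>j<n. P k j * b j)) =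
      (\<Sum>i<n. \<Sum>j<n. a i * b j * G i j)" for a b
  proof -
    have "(\<Sum>k<n. (\<Sum>i<n. P k i * a i) * (\<Sum>j<n. P k j * b j)) =
        (\<Sum>k<n. \<Sum>i<n. \<Sum>j<n. a i * b j * (P k i * P k j))"
      unfolding sum_product by (intro sum.cong refl) (simp add: mult_ac)
    also have "\<dots> = (\<Sum>i<n. \<Sum>j<n. \<Sum>k<n. a i * b j * (P k i * P k j))"
      by (subst sum.swap) (rule sum.cong[OF refl], rule sum.swap)
    finally show ?thesis unfolding G_def by (simp add: sum_distrib_left)
  qed
  have G_h: "G i j * h j = h i * G i j" if i: "i < n" and j: "j < n" for i j
  proof -
    have "G i j * h j = (\<Sum>k<n. P k i * (\<Sum>l<n. X k l * P l j))"
      unfolding G_def using XP j by (simp add: sum_distrib_right mult.assoc)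
    also have "\<dots> = (\<Sum>k<n. \<Sum>l<n. P l j * (X l k * P k i))"
      by (auto simp: sum_distrib_left symX mult_ac intro!: sum.cong)
    also have "\<dots> = (\<Sum>l<n. P l j * (\<Sum>k<n. X l k * P k i))"
      by (subst sum.swap) (simp add: sum_distrib_left)
    also have "\<dots> = h i * G i j"
      unfolding G_def using XP i by (simp add: sum_distrib_left mult_ac)
    finally show ?thesis .
  qed
  have inner: "(\<Sum>l<n. X k l * (\<Sum>j<n. P l j * c j)) = (\<Sum>j<n. P k j * (h j * c j))"
    if k: "k < n" for k
  proof -
    have "(\<Sum>l<n. X k l * (\<Sum>j<n. P l j * c j)) = (\<Sum>j<n. \<Sum>l<n. X k l * P l j * c j)"
      by (subst sum.swap) (simp add: sum_distrib_left mult_ac)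
    also have "\<dots> = (\<Sum>j<n. (\<Sum>l<n. X k l * P l j) * c j)"
      by (simp add: sum_distrib_right)
    also have "\<dots> = (\<Sum>j<n. P k j * (h j * c j))"
      using XP k by (simp add: mult_ac)
    finally show ?thesis .
  qed
  define r where "r i = sqrt (h i) * c i" for i
  have "(\<Sum>k<n. (\<Sum>i<n. P k i * c i) * (\<Sum>l<n. X k l * (\<Sum>j<n. P l j * c j))) =
      (\<Sum>i<n. \<Sum>j<n. c i * (h j * c j) * G i j)"
    using inner by (simp add: bilinear)
  also have "\<dots> = (\<Sum>i<n. \<Sum>j<n. r i * r j * G i j)"
  proof (intro sum.cong refl)
    fix i j assume "i \<in> {..<n}" "j \<in> {..<n}"
    with h G_h[of i j] show "c i * (h j * c j) * G i j = r i * r j * G i j"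
      unfolding r_def by (cases "G i j = 0") (auto simp: real_sqrt_mult[symmetric] mult_ac)
  qed
  also have "\<dots> = (\<Sum>k<n. (\<Sum>i<n. P k i * r i) * (\<Sum>j<n. P k j * r j))"
    by (simp add: bilinear)
  also have "\<dots> \<ge> 0" by (intro sum_nonneg) simp
  finally show ?thesis .
qed

lemma sym_mat_psd_if_diagonalizable:
  fixes X P Q :: "real mat"
  assumes S: "sym_mat n X" and P: "P \<in> carrier_mat n n" and Q: "Q \<in> carrier_mat n n"
    and PQ: "P * Q = 1\<^sub>m n" and XP: "X * P = P * mat_diag n h"
    and h: "\<And>j. j < n \<Longrightarrow> h j \<ge> 0"
  shows "psd_mat n X"
  unfolding psd_mat_def
proof
  fix y :: "real vec" assume y: "y \<in> carrier_vec n"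
  have X: "X \<in> carrier_mat n n" using S by (rule sym_mat_carrier)
  define c where "c = Q *\<^sub>v y"
  have c: "c \<in> carrier_vec n" unfolding c_def using Q y by simp
  have "y = P *\<^sub>v c" unfolding c_def using assoc_mult_mat_vec[OF P Q y] PQ y by simp
  then have y_P: "y $ k = (\<Sum>i<n. P $$ (k,i) * c $ i)" if "k < n" for k
    using index_mult_mat_vec_sum[OF P c that] by simp
  have XP_entries: "(\<Sum>l<n. X $$ (k,l) * P $$ (l,j)) = P $$ (k,j) * h j" if "k < n" "j < n" for k j
    using arg_cong[OF XP, of "\<lambda>M. M $$ (k,j)"] that X P
    by (simp add: mat_diag_mult_right[OF P] scalar_prod_def atLeast0LessThan)
  have "y \<bullet> (X *\<^sub>v y) = (\<Sum>k<n. y $ k * (\<Sum>l<n. X $$ (k,l) * y $ l))"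
    using X y by (simp add: scalar_prod_def atLeast0LessThan index_mult_mat_vec_sum)
  also have "\<dots> = (\<Sum>k<n. (\<Sum>i<n. P $$ (k,i) * c $ i) *
      (\<Sum>l<n. X $$ (k,l) * (\<Sum>j<n. P $$ (l,j) * c $ j)))"
    by (simp add: y_P)
  also have "\<dots> \<ge> 0"
    by (rule quadratic_form_eigenbasis_nonneg[where h = h])
      (use S XP_entries h in \<open>auto simp: sym_mat_def\<close>)
  finally show "y \<bullet> (X *\<^sub>v y) \<ge> 0" .
qed

text \<open>Perron--Frobenius for a symmetric matrix that is nonnegative up to the signs \<open>s\<close>:
  replacing \<open>x\<close> by \<open>s |x|\<close> does not lower the Rayleigh quotient, so \<open>s |x|\<close> is again an
  eigenvector for the top eigenvalue \<open>\<rho>\<close>, and its eigen-equation at a zero entry \<open>a\<close> forces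
  \<open>x\<close> to vanish at every \<open>b\<close> linked to \<open>a\<close>.\<close>

lemma signed_perron_eigenvector_zero_propagates:
  fixes C :: "real mat" and s :: "nat \<Rightarrow> real"
  assumes S: "sym_mat n C" and top: "psd_mat n (\<rho> \<cdot>\<^sub>m 1\<^sub>m n - C)"
    and signs: "\<And>i. \<bar>s i\<bar> = 1"
    and signed_nonneg: "\<And>i j. i < n \<Longrightarrow> j < n \<Longrightarrow> s i * s j * C $$ (i,j) \<ge> 0"
    and x: "x \<in> carrier_vec n" and Cx: "C *\<^sub>v x = \<rho> \<cdot>\<^sub>v x"
    and a: "a < n" and b: "b < n" and linked: "s a * s b * C $$ (a,b) > 0" and xa: "x $ a = 0"
  shows "x $ b = 0"
proof -
  have C: "C \<in> carrier_mat n n" using S by (rule sym_mat_carrier)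
  define X where "X = \<rho> \<cdot>\<^sub>m 1\<^sub>m n - C"
  have SX: "sym_mat n X" unfolding X_def by (rule sym_mat_smult_one_minus[OF S])
  define y where "y = vec n (\<lambda>i. s i * \<bar>x $ i\<bar>)"
  have y: "y \<in> carrier_vec n" unfolding y_def by simp
  have s_sq: "s i * s i = 1" for i using abs_mult_self_eq[of "s i"] signs[of i] by simp
  have "y \<bullet> y = x \<bullet> x"
    using x by (auto simp: y_def scalar_prod_def abs_mult_self_eq s_sq mult_ac
        simp flip: abs_mult intro!: sum.cong)
  moreover have "x \<bullet> (C *\<^sub>v x) \<le> y \<bullet> (C *\<^sub>v y)"
    unfolding scalar_prod_mult_mat_vec_sum[OF C x] scalar_prod_mult_mat_vec_sum[OF C y]
  proof (intro sum_mono)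
    fix i j assume "i \<in> {..<n}" "j \<in> {..<n}"
    then have "0 \<le> s i * s j * C $$ (i,j)" and ij: "i < n" "j < n" using signed_nonneg by auto
    have "C $$ (i,j) * (x $ i * x $ j) \<le> \<bar>C $$ (i,j) * (x $ i * x $ j)\<bar>" by simp
    also have "\<dots> = \<bar>s i * s j * C $$ (i,j)\<bar> * (\<bar>x $ i\<bar> * \<bar>x $ j\<bar>)"
      using signs by (simp add: abs_mult)
    also have "\<dots> = C $$ (i,j) * (y $ i * y $ j)"
      using \<open>0 \<le> s i * s j * C $$ (i,j)\<close> ij unfolding y_def by (simp add: mult_ac)
    finally show "C $$ (i,j) * (x $ i * x $ j) \<le> C $$ (i,j) * (y $ i * y $ j)" .
  qed
  ultimately have "y \<bullet> (X *\<^sub>v y) \<le> 0"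
    using C x y Cx by (simp add: X_def smult_one_minus_mult_mat_vec scalar_prod_minus_distrib)
  then have "X *\<^sub>v y = 0\<^sub>v n" using psd_mat_quadratic_form_zero[OF SX top[folded X_def] y] by simp
  then have "(C *\<^sub>v y) $ a = 0"
    using C y a xa
    by (auto simp: X_def smult_one_minus_mult_mat_vec y_def dest!: arg_cong[where f = "\<lambda>v. v $ a"])
  moreover have "(\<Sum>j<n. (s a * s j * C $$ (a,j)) * \<bar>x $ j\<bar>) = s a * (C *\<^sub>v y) $ a"
    unfolding index_mult_mat_vec_sum[OF C y a] sum_distrib_left
    by (intro sum.cong) (auto simp: y_def mult_ac)
  ultimately have "(\<Sum>j<n. (s a * s j * C $$ (a,j)) * \<bar>x $ j\<bar>) = 0" by simp
  then have "(s a * s b * C $$ (a,b)) * \<bar>x $ b\<bar> = 0"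
    using b
    by (subst (asm) sum_nonneg_eq_0_iff) (auto intro!: mult_nonneg_nonneg signed_nonneg[OF a])
  then show ?thesis using linked by (metis abs_eq_0 less_irrefl mult_eq_0_iff)
qed

section \<open>Acyclic graphs\<close>

definition is_path :: "(nat \<Rightarrow> nat \<Rightarrow> bool) \<Rightarrow> nat set \<Rightarrow> nat list \<Rightarrow> bool" where
  "is_path E V vs \<longleftrightarrow> vs \<noteq> [] \<and> distinct vs \<and> set vs \<subseteq> V \<and>
     (\<forall>k. Suc k < length vs \<longrightarrow> E (vs ! k) (vs ! Suc k))"

lemma is_path_length_le: "finite V \<Longrightarrow> is_path E V vs \<Longrightarrow> length vs \<le> card V"
  unfolding is_path_def by (metis card_mono distinct_card)

lemma is_path_snoc:
  assumes p: "is_path E V vs" and c: "c \<in> V" "c \<notin> set vs" "E (last vs) c"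
  shows "is_path E V (vs @ [c])"
  unfolding is_path_def
proof (intro conjI allI impI)
  fix k assume k: "Suc k < length (vs @ [c])"
  show "E ((vs @ [c]) ! k) ((vs @ [c]) ! Suc k)"
  proof (cases "Suc k < length vs")
    case True
    then show ?thesis using p by (simp add: nth_append is_path_def)
  next
    case False
    then have "k = length vs - 1" "vs \<noteq> []" using k p by (auto simp: is_path_def)
    then show ?thesis using c by (simp add: nth_append last_conv_nth)
  qed
qed (use p c in \<open>auto simp: is_path_def\<close>)

lemma is_cycle_drop:
  assumes p: "is_path E V vs" and k: "k + 2 < length vs" and closing: "E (last vs) (vs ! k)"
  shows "is_cycle E (drop k vs)"
  unfolding is_cycle_def
  using assms by (auto simp: is_path_def hd_drop_conv_nth)

text \<open>The last vertex of a longest path has no neighbour off the path, by maximality, and no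
  neighbour on it except its predecessor, by acyclicity.\<close>

lemma acyclic_graph_has_leaf:
  assumes V: "finite V" "V \<noteq> {}"
    and irrefl: "\<And>i. \<not> E i i" and acyclic: "\<nexists>vs. is_cycle E vs"
  shows "\<exists>l\<in>V. \<forall>a\<in>V. \<forall>b\<in>V. E l a \<longrightarrow> E l b \<longrightarrow> a = b"
proof -
  obtain x where "x \<in> V" using V by auto
  then have "is_path E V [x]" by (simp add: is_path_def)
  then obtain vs where vs: "is_path E V vs"
    and longest: "\<And>us. is_path E V us \<Longrightarrow> length us \<le> length vs"
    using ex_has_greatest_nat[of "is_path E V" "[x]" length "Suc (card V)"]
      is_path_length_le[OF V(1)] by (metis less_Suc_eq_le)
  define m where "m = length vs"
  have l: "last vs = vs ! (m - 1)" "last vs \<in> V" "m \<ge> 1"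
    using vs by (auto simp: m_def is_path_def last_conv_nth Suc_le_eq)
  have neighbour: "c = vs ! (m - 2)" if c: "c \<in> V" "E (last vs) c" for c
  proof -
    have "c \<in> set vs"
      using longest[OF is_path_snoc[OF vs c(1) _ c(2)]] by auto
    then obtain k where k: "k < m" "c = vs ! k" unfolding m_def by (auto simp: in_set_conv_nth)
    have "k \<noteq> m - 1" using k c irrefl l by auto
    moreover have "\<not> k + 2 < m"
      using is_cycle_drop[OF vs _ c(2)[unfolded k(2)]] acyclic unfolding m_def by blast
    ultimately have "k = m - 2" using k(1) by linarith
    then show ?thesis using k(2) by simp
  qed
  show ?thesis using l(2) neighbour by blast
qed

lemma acyclic_graph_two_colouring:
  assumes V: "finite V"
    and irrefl: "\<And>i. \<not> E i i" and sym: "\<And>i j. E i j = E j i"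
    and acyclic: "\<nexists>vs. is_cycle E vs"
  shows "\<exists>D :: nat \<Rightarrow> bool. \<forall>i\<in>V. \<forall>j\<in>V. E i j \<longrightarrow> D i \<noteq> D j"
  using V
proof (induction "card V" arbitrary: V rule: less_induct)
  case less
  show ?case
  proof (cases "V = {}")
    case False
    obtain l where l: "l \<in> V" and leaf: "\<And>a b. a \<in> V \<Longrightarrow> b \<in> V \<Longrightarrow> E l a \<Longrightarrow> E l b \<Longrightarrow> a = b"
      using acyclic_graph_has_leaf[OF less.prems False irrefl acyclic] by blast
    have "card (V - {l}) < card V" by (rule card_Diff1_less[OF less.prems l])
    then obtain D :: "nat \<Rightarrow> bool" where D: "\<forall>i\<in>V - {l}. \<forall>j\<in>V - {l}. E i j \<longrightarrow> D i \<noteq> D j"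
      using less.hyps less.prems by blast
    show ?thesis
    proof (cases "\<exists>u\<in>V. E l u")
      case True
      then obtain u where u: "u \<in> V" "E l u" by blast
      have "u \<noteq> l" using u irrefl by auto
      then have "\<forall>i\<in>V. \<forall>j\<in>V. E i j \<longrightarrow> (D(l := \<not> D u)) i \<noteq> (D(l := \<not> D u)) j"
        using D leaf u sym by (metis Diff_iff fun_upd_apply singletonD)
      then show ?thesis by blast
    next
      case False
      then have "\<forall>i\<in>V. \<forall>j\<in>V. E i j \<longrightarrow> D i \<noteq> D j"
        using D sym by (metis Diff_iff singletonD)
      then show ?thesis by blast
    qed
  qed simp
qed

section \<open>Weighted trees of class \<open>\<T>\<close>\<close>

locale T_tree =
  fixes n :: nat and E :: "nat \<Rightarrow> nat \<Rightarrow> bool" and w :: "nat \<Rightarrow> nat \<Rightarrow> real"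
  assumes in_class_T: "class_T n E"
    and weight_sym: "\<And>i j. E i j \<Longrightarrow> w i j = w j i"
    and weight_pos: "\<And>i j. E i j \<Longrightarrow> w i j > 0"
begin

lemma is_tree: "is_tree n E"
  using in_class_T by (simp add: class_T_def)

lemma edge_less: "E i j \<Longrightarrow> i < n \<and> j < n"
  using is_tree unfolding is_tree_def simple_graph_def by blast

lemma edge_sym: "E i j = E j i"
  using is_tree by (simp add: is_tree_def simple_graph_def)

lemma edge_irrefl: "\<not> E i i"
  using is_tree by (simp add: is_tree_def simple_graph_def)

lemma connected: "i < n \<Longrightarrow> j < n \<Longrightarrow> E\<^sup>*\<^sup>* i j"
  using is_tree by (simp add: is_tree_def graph_connected_def)

lemma n_pos: "0 < n"
  using is_tree by (simp add: is_tree_def)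

abbreviation leaf :: "nat \<Rightarrow> bool" where
  "leaf i \<equiv> pendant n E i"

definition parent :: "nat \<Rightarrow> nat" where
  "parent i = (THE j. j < n \<and> E i j)"

lemma leaf_neighbours:
  assumes "leaf p"
  shows "{j. j < n \<and> E p j} = {parent p}"
proof -
  obtain x where x: "{j. j < n \<and> E p j} = {x}"
    using assms by (auto simp: pendant_def degree_def card_1_singleton_iff)
  then have "parent p = x"
    unfolding parent_def by (metis (mono_tags) mem_Collect_eq singleton_iff the_equality)
  with x show ?thesis by simp
qed

lemma leaf_edge_iff: "leaf p \<Longrightarrow> E p j \<longleftrightarrow> j = parent p"
  using leaf_neighbours edge_less by blast

lemma leaf_parent: "leaf p \<Longrightarrow> E p (parent p)"
  by (simp add: leaf_edge_iff)

lemma leaf_less: "leaf p \<Longrightarrow> p < n"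
  using leaf_parent edge_less by blast

lemma parent_less: "leaf p \<Longrightarrow> parent p < n"
  using leaf_parent edge_less by blast

text \<open>Two adjacent leaves would form a connected component of their own, while the tree also
  has a non-pendant vertex.\<close>

lemma parent_not_leaf:
  assumes p: "leaf p"
  shows "\<not> leaf (parent p)"
proof
  let ?q = "parent p"
  assume q: "leaf ?q"
  have "parent ?q = p" using leaf_edge_iff[OF q] leaf_parent[OF p] edge_sym by simp
  obtain i where i: "i < n" "\<not> leaf i" using in_class_T unfolding class_T_def by blast
  have "E\<^sup>*\<^sup>* p i" using connected[OF leaf_less[OF p] i(1)] .
  then have "i \<in> {p, ?q}"
    by (induct rule: rtranclp_induct)
      (use leaf_edge_iff[OF p] leaf_edge_iff[OF q] \<open>parent ?q = p\<close> in auto)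
  then show False using i p q by auto
qed

lemma non_leaf_has_child:
  assumes "v < n" "\<not> leaf v"
  obtains p where "leaf p" "parent p = v"
  using assms in_class_T leaf_edge_iff edge_sym unfolding class_T_def by metis

definition adj :: "nat \<Rightarrow> nat \<Rightarrow> real" where
  "adj i j = (if E i j then w i j else 0)"

abbreviation Adj :: "real mat" where
  "Adj \<equiv> adj_matrix n E w"

lemma Adj_carrier: "Adj \<in> carrier_mat n n"
  unfolding adj_matrix_def by simp

lemma Adj_index: "i < n \<Longrightarrow> j < n \<Longrightarrow> Adj $$ (i,j) = adj i j"
  unfolding adj_matrix_def adj_def by simp

lemma adj_sym: "adj i j = adj j i"
  unfolding adj_def using edge_sym weight_sym by auto

lemma sym_mat_Adj: "sym_mat n Adj"
  unfolding sym_mat_def using Adj_carrier Adj_index adj_sym by simp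

lemma Adj_row: "x \<in> carrier_vec n \<Longrightarrow> i < n \<Longrightarrow> (Adj *\<^sub>v x) $ i = (\<Sum>j<n. adj i j * x $ j)"
  using index_mult_mat_vec_sum[OF Adj_carrier] Adj_index by simp

definition children :: "nat \<Rightarrow> nat set" where
  "children v = {p. p < n \<and> leaf p \<and> parent p = v}"

definition child_sq_sum :: "nat \<Rightarrow> real" where
  "child_sq_sum v = (\<Sum>p\<in>children v. (w p v)\<^sup>2)"

text \<open>The weights \<open>alpha\<close> are normalised so that \<open>\<Sum>p\<in>children v. alpha p * w p v = 1\<close>.\<close>

definition alpha :: "nat \<Rightarrow> real" where
  "alpha p = w p (parent p) / child_sq_sum (parent p)"

definition child_weighted_sum :: "real vec \<Rightarrow> nat \<Rightarrow> real" where
  "child_weighted_sum x v = (\<Sum>p\<in>children v. alpha p * x $ p)"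

text \<open>\<open>pinv\<close> is the Moore--Penrose pseudo-inverse of \<open>Adj\<close> (see \<open>pinv_mult_eigenvector\<close>),
  which for trees of class \<open>\<T>\<close> can be written down entrywise.\<close>

definition pinv :: "real mat" where
  "pinv = mat n n (\<lambda>(a,b).
     if leaf a then
       if leaf b then - alpha a * alpha b * adj (parent a) (parent b)
       else if b = parent a then alpha a else 0
     else if leaf b \<and> parent b = a then alpha b else 0)"

lemma finite_children[simp]: "finite (children v)"
  unfolding children_def by simp

lemma children_leaf: "leaf v \<Longrightarrow> children v = {}"
  unfolding children_def using parent_not_leaf by auto

lemma child_sq_sum_pos:
  assumes "v < n" "\<not> leaf v"
  shows "child_sq_sum v > 0"
proof -
  obtain p where p: "leaf p" "parent p = v" using non_leaf_has_child[OF assms] .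
  then have "p \<in> children v" unfolding children_def using leaf_less by blast
  moreover have "(w p v)\<^sup>2 > 0" using weight_pos leaf_parent p by fastforce
  ultimately show ?thesis
    unfolding child_sq_sum_def by (meson finite_children sum_pos2 zero_le_power2)
qed

lemma alpha_pos: "leaf p \<Longrightarrow> alpha p > 0"
  unfolding alpha_def
  using child_sq_sum_pos[OF parent_less parent_not_leaf] weight_pos[OF leaf_parent] by simp

lemma child_weighted_sum_eq:
  "child_weighted_sum x v = (\<Sum>p\<in>children v. w p v * x $ p) / child_sq_sum v"
  unfolding child_weighted_sum_def alpha_def children_def by (simp add: sum_divide_distrib)

lemma child_weighted_sum_leaf: "leaf v \<Longrightarrow> child_weighted_sum x v = 0"
  unfolding child_weighted_sum_def using children_leaf by simp

lemma sum_children: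
  "(\<Sum>p\<in>children v. h p) = (\<Sum>p | p < n \<and> leaf p. if parent p = v then h p else 0)"
proof -
  have "children v = {p \<in> {p. p < n \<and> leaf p}. parent p = v}"
    unfolding children_def by auto
  then show ?thesis by (simp only:) (rule sum.inter_filter, simp)
qed

lemma pinv_carrier: "pinv \<in> carrier_mat n n"
  unfolding pinv_def by simp

lemma pinv_index:
  "a < n \<Longrightarrow> b < n \<Longrightarrow> pinv $$ (a,b) =
     (if leaf a then
       if leaf b then - alpha a * alpha b * adj (parent a) (parent b)
       else if b = parent a then alpha a else 0
     else if leaf b \<and> parent b = a then alpha b else 0)"
  unfolding pinv_def by simp

lemma sym_mat_pinv: "sym_mat n pinv"
  unfolding sym_mat_def using pinv_carrier by (auto simp: pinv_index adj_sym)

lemma sum_split_leaves: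
  "(\<Sum>j<n. f j) = (\<Sum>j | j < n \<and> \<not> leaf j. f j) + (\<Sum>j | j < n \<and> leaf j. f j)"
proof -
  have "(\<Sum>j<n. f j) = (\<Sum>j \<in> {j. j < n \<and> \<not> leaf j} \<union> {j. j < n \<and> leaf j}. f j)"
    by (rule sum.cong) auto
  also have "\<dots> = (\<Sum>j | j < n \<and> \<not> leaf j. f j) + (\<Sum>j | j < n \<and> leaf j. f j)"
    by (rule sum.union_disjoint) auto
  finally show ?thesis .
qed

lemma sum_leaves_by_parent:
  fixes f g :: "nat \<Rightarrow> real"
  shows "(\<Sum>p | p < n \<and> leaf p. f (parent p) * g p) = (\<Sum>v<n. f v * (\<Sum>p\<in>children v. g p))"
proof -
  have "(\<Sum>p | p < n \<and> leaf p. f (parent p) * g p) =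
      (\<Sum>p | p < n \<and> leaf p. \<Sum>v<n. if parent p = v then f v * g p else 0)"
    by (intro sum.cong refl) (simp add: parent_less)
  also have "\<dots> = (\<Sum>v<n. \<Sum>p | p < n \<and> leaf p. if parent p = v then f v * g p else 0)"
    by (rule sum.swap)
  also have "\<dots> = (\<Sum>v<n. f v * (\<Sum>p\<in>children v. g p))"
    unfolding sum_children sum_distrib_left by (intro sum.cong refl) simp
  finally show ?thesis .
qed

lemma Adj_row_leaf:
  assumes "x \<in> carrier_vec n" "leaf p"
  shows "(Adj *\<^sub>v x) $ p = w p (parent p) * x $ parent p"
proof -
  have "(Adj *\<^sub>v x) $ p = (\<Sum>j<n. adj p j * x $ j)"
    using assms by (simp add: Adj_row leaf_less)
  also have "\<dots> = (\<Sum>j<n. if j = parent p then w p (parent p) * x $ parent p else 0)"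
    by (intro sum.cong refl) (auto simp: adj_def leaf_edge_iff[OF assms(2)])
  finally show ?thesis using parent_less[OF assms(2)] by simp
qed

lemma Adj_row_non_leaf:
  assumes x: "x \<in> carrier_vec n" and u: "u < n" "\<not> leaf u"
  shows "(Adj *\<^sub>v x) $ u =
    (\<Sum>j | j < n \<and> \<not> leaf j. adj u j * x $ j) + (\<Sum>p\<in>children u. w p u * x $ p)"
proof -
  have "(\<Sum>j | j < n \<and> leaf j. adj u j * x $ j) =
      (\<Sum>j | j < n \<and> leaf j. if parent j = u then w j u * x $ j else 0)"
    by (intro sum.cong refl)
      (auto simp: adj_def edge_sym[of u] leaf_edge_iff weight_sym[of u] leaf_parent)
  also have "\<dots> = (\<Sum>p\<in>children u. w p u * x $ p)"
    by (simp add: sum_children)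
  finally show ?thesis using sum_split_leaves[of "\<lambda>j. adj u j * x $ j"] Adj_row[OF x u(1)] by simp
qed

lemma pinv_row_non_leaf:
  assumes x: "x \<in> carrier_vec n" and v: "v < n" "\<not> leaf v"
  shows "(pinv *\<^sub>v x) $ v = child_weighted_sum x v"
proof -
  have "(pinv *\<^sub>v x) $ v = (\<Sum>b<n. if b \<in> children v then alpha b * x $ b else 0)"
    using x v by (auto simp: index_mult_mat_vec_sum[OF pinv_carrier] pinv_index children_def
        intro!: sum.cong)
  also have "\<dots> = child_weighted_sum x v"
    unfolding child_weighted_sum_def
    by (subst sum.inter_restrict[symmetric]) (auto simp: children_def intro!: sum.cong)
  finally show ?thesis .
qed

lemma pinv_row_leaf:
  assumes x: "x \<in> carrier_vec n" and p: "leaf p"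
  shows "(pinv *\<^sub>v x) $ p =
    alpha p * (x $ parent p - (\<Sum>v<n. adj (parent p) v * child_weighted_sum x v))"
proof -
  have p_less: "p < n" "parent p < n" and "\<not> leaf (parent p)"
    using leaf_less parent_less parent_not_leaf p by auto
  have "(\<Sum>b | b < n \<and> \<not> leaf b. pinv $$ (p,b) * x $ b) =
      (\<Sum>b | b < n \<and> \<not> leaf b. if b = parent p then alpha p * x $ b else 0)"
    by (intro sum.cong refl) (use p_less p in \<open>auto simp: pinv_index\<close>)
  also have "\<dots> = alpha p * x $ parent p"
    by (subst sum.delta) (use p_less \<open>\<not> leaf (parent p)\<close> in auto)
  finally have non_leaves:
    "(\<Sum>b | b < n \<and> \<not> leaf b. pinv $$ (p,b) * x $ b) = alpha p * x $ parent p" .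
  have "(\<Sum>b | b < n \<and> leaf b. pinv $$ (p,b) * x $ b) =
      (\<Sum>b | b < n \<and> leaf b. (- alpha p * adj (parent p) (parent b)) * (alpha b * x $ b))"
    by (intro sum.cong refl) (use p_less p in \<open>auto simp: pinv_index\<close>)
  also have "\<dots> = (\<Sum>v<n. (- alpha p * adj (parent p) v) * child_weighted_sum x v)"
    unfolding child_weighted_sum_def by (rule sum_leaves_by_parent)
  also have "\<dots> = - alpha p * (\<Sum>v<n. adj (parent p) v * child_weighted_sum x v)"
    by (simp add: sum_distrib_left mult.assoc)
  finally have leaves: "(\<Sum>b | b < n \<and> leaf b. pinv $$ (p,b) * x $ b) =
      - alpha p * (\<Sum>v<n. adj (parent p) v * child_weighted_sum x v)" .
  show ?thesis
    using sum_split_leaves[of "\<lambda>b. pinv $$ (p,b) * x $ b"] non_leaves leaves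
    by (simp add: index_mult_mat_vec_sum[OF pinv_carrier x p_less(1)] algebra_simps)
qed

lemma eigen_equation_leaf:
  assumes x: "x \<in> carrier_vec n" and eig: "Adj *\<^sub>v x = \<mu> \<cdot>\<^sub>v x" and p: "leaf p"
  shows "\<mu> * x $ p = w p (parent p) * x $ parent p"
  using arg_cong[OF eig, of "\<lambda>v. v $ p"] Adj_row_leaf[OF x p] x leaf_less[OF p] by simp

lemma eigen_equation_children:
  assumes x: "x \<in> carrier_vec n" and eig: "Adj *\<^sub>v x = \<mu> \<cdot>\<^sub>v x" and "\<mu> \<noteq> 0"
  shows "(\<Sum>p\<in>children v. w p v * x $ p) = child_sq_sum v * x $ v / \<mu>"
  unfolding child_sq_sum_def sum_divide_distrib sum_distrib_right
proof (intro sum.cong refl)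
  fix p assume "p \<in> children v"
  then have "leaf p" "parent p = v" unfolding children_def by auto
  then show "w p v * x $ p = (w p v)\<^sup>2 * x $ v / \<mu>"
    using eigen_equation_leaf[OF x eig] \<open>\<mu> \<noteq> 0\<close> by (simp add: field_simps power2_eq_square)
qed

lemma child_weighted_sum_eigenvector:
  assumes x: "x \<in> carrier_vec n" and eig: "Adj *\<^sub>v x = \<mu> \<cdot>\<^sub>v x" and "\<mu> \<noteq> 0"
    and v: "v < n" "\<not> leaf v"
  shows "child_weighted_sum x v = x $ v / \<mu>"
  using child_sq_sum_pos[OF v]
  by (simp add: child_weighted_sum_eq eigen_equation_children[OF x eig \<open>\<mu> \<noteq> 0\<close>])

lemma pinv_mult_eigenvector_nonzero:
  assumes x: "x \<in> carrier_vec n" and eig: "Adj *\<^sub>v x = \<mu> \<cdot>\<^sub>v x" and "\<mu> \<noteq> 0"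
  shows "pinv *\<^sub>v x = (1 / \<mu>) \<cdot>\<^sub>v x"
proof (rule eq_vecI)
  fix i assume "i < dim_vec ((1 / \<mu>) \<cdot>\<^sub>v x)"
  then have i: "i < n" using x by simp
  show "(pinv *\<^sub>v x) $ i = ((1 / \<mu>) \<cdot>\<^sub>v x) $ i"
  proof (cases "leaf i")
    case False
    then show ?thesis
      using pinv_row_non_leaf[OF x i] child_weighted_sum_eigenvector[OF x eig \<open>\<mu> \<noteq> 0\<close> i] i x by simp
  next
    case True
    let ?u = "parent i"
    have u: "?u < n" "\<not> leaf ?u" using parent_less parent_not_leaf True by auto
    have "(\<Sum>v<n. adj ?u v * child_weighted_sum x v) = (\<Sum>v | v < n \<and> \<not> leaf v. adj ?u v * x $ v) / \<mu>"
      unfolding sum_split_leaves[of "\<lambda>v. adj ?u v * child_weighted_sum x v"]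
      by (simp add: child_weighted_sum_leaf child_weighted_sum_eigenvector[OF x eig \<open>\<mu> \<noteq> 0\<close>]
          sum_divide_distrib)
    also have "\<dots> = (\<mu> * x $ ?u - child_sq_sum ?u * x $ ?u / \<mu>) / \<mu>"
      using Adj_row_non_leaf[OF x u] arg_cong[OF eig, of "\<lambda>v. v $ ?u"] u x
        eigen_equation_children[OF x eig \<open>\<mu> \<noteq> 0\<close>, of ?u]
      by simp
    finally have "(pinv *\<^sub>v x) $ i =
        alpha i * (x $ ?u - (\<mu> * x $ ?u - child_sq_sum ?u * x $ ?u / \<mu>) / \<mu>)"
      using pinv_row_leaf[OF x True] by simp
    also have "\<dots> = alpha i * child_sq_sum ?u * x $ ?u / \<mu>\<^sup>2"
      using \<open>\<mu> \<noteq> 0\<close> by (simp add: field_simps power2_eq_square)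
    also have "\<dots> = w i ?u * x $ ?u / \<mu>\<^sup>2"
      using child_sq_sum_pos[OF u] by (simp add: alpha_def)
    also have "\<dots> = ((1 / \<mu>) \<cdot>\<^sub>v x) $ i"
      using eigen_equation_leaf[OF x eig True] i x \<open>\<mu> \<noteq> 0\<close>
      by (simp add: field_simps power2_eq_square)
    finally show ?thesis .
  qed
qed (use x pinv_carrier in simp)

lemma pinv_mult_eigenvector_zero:
  assumes x: "x \<in> carrier_vec n" and eig: "Adj *\<^sub>v x = 0 \<cdot>\<^sub>v x"
  shows "pinv *\<^sub>v x = 0 \<cdot>\<^sub>v x"
proof -
  have parent_zero: "x $ parent p = 0" if "leaf p" for p
    using eigen_equation_leaf[OF x eig that] weight_pos[OF leaf_parent[OF that]] by simp
  have non_leaf_zero: "x $ v = 0" if "v < n" "\<not> leaf v" for v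
    using non_leaf_has_child[OF that] parent_zero by metis
  have child_weighted_sum_zero: "child_weighted_sum x v = 0" if v: "v < n" for v
  proof (cases "leaf v")
    case False
    have "(\<Sum>j | j < n \<and> \<not> leaf j. adj v j * x $ j) = 0"
      by (intro sum.neutral) (simp add: non_leaf_zero)
    then have "(\<Sum>p\<in>children v. w p v * x $ p) = 0"
      using Adj_row_non_leaf[OF x v False] arg_cong[OF eig, of "\<lambda>u. u $ v"] v x by simp
    then show ?thesis by (simp add: child_weighted_sum_eq)
  qed (rule child_weighted_sum_leaf)
  show ?thesis
  proof (rule eq_vecI)
    fix i assume "i < dim_vec (0 \<cdot>\<^sub>v x)"
    then have i: "i < n" using x by simp
    then show "(pinv *\<^sub>v x) $ i = (0 \<cdot>\<^sub>v x) $ i"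
      using pinv_row_non_leaf[OF x i] pinv_row_leaf[OF x] child_weighted_sum_zero parent_zero x
      by (cases "leaf i") simp_all
  qed (use x pinv_carrier in simp)
qed

text \<open>For \<open>\<mu> = 0\<close> the conclusion reads \<open>pinv *\<^sub>v x = 0\<close>, because \<open>1 / 0 = 0\<close>.\<close>

lemma pinv_mult_eigenvector:
  assumes "x \<in> carrier_vec n" and "Adj *\<^sub>v x = \<mu> \<cdot>\<^sub>v x"
  shows "pinv *\<^sub>v x = (1 / \<mu>) \<cdot>\<^sub>v x"
  using assms pinv_mult_eigenvector_nonzero pinv_mult_eigenvector_zero by (cases "\<mu> = 0") auto

lemma two_colouring: "\<exists>D :: nat \<Rightarrow> bool. \<forall>i j. E i j \<longrightarrow> D i \<noteq> D j"
proof -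
  obtain D :: "nat \<Rightarrow> bool" where "\<forall>i\<in>{..<n}. \<forall>j\<in>{..<n}. E i j \<longrightarrow> D i \<noteq> D j"
    using acyclic_graph_two_colouring[of "{..<n}" E] edge_irrefl edge_sym is_tree
    unfolding is_tree_def by blast
  then show ?thesis using edge_less by blast
qed

definition side :: "nat \<Rightarrow> real" where
  "side i = (if (SOME D. \<forall>i j. E i j \<longrightarrow> D i \<noteq> D j) i then 1 else -1)"

lemma side_edge: "E i j \<Longrightarrow> side j = - side i"
  using someI_ex[OF two_colouring] unfolding side_def by (smt (verit))

lemma side_sq: "side i * side i = 1"
  unfolding side_def by simp

text \<open>The signature under which \<open>pinv\<close> becomes a nonnegative matrix.\<close>

definition signing :: "nat \<Rightarrow> real" where
  "signing i = side (if leaf i then parent i else i)"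

lemma abs_signing: "\<bar>signing i\<bar> = 1"
  unfolding signing_def side_def by simp

lemma signing_leaves:
  "leaf p \<Longrightarrow> leaf q \<Longrightarrow> E (parent p) (parent q) \<Longrightarrow> signing p * signing q = -1"
  unfolding signing_def using side_edge side_sq by simp

lemma signing_parent: "leaf p \<Longrightarrow> signing p * signing (parent p) = 1"
  unfolding signing_def using parent_not_leaf side_sq by simp

lemma pinv_signed_nonneg:
  assumes "a < n" "b < n"
  shows "signing a * signing b * pinv $$ (a,b) \<ge> 0"
proof -
  have "alpha a * alpha b * adj (parent a) (parent b) \<ge> 0" if "leaf a" "leaf b"
    using alpha_pos that by (simp add: adj_def weight_pos less_imp_le)
  then show ?thesis
    using assms alpha_pos signing_leaves[of a b] signing_parent[of a] signing_parent[of b]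
    by (auto simp: pinv_index adj_def mult.commute[of "signing b"] less_imp_le)
qed

lemma pinv_signed_parent: "leaf p \<Longrightarrow> signing p * signing (parent p) * pinv $$ (p, parent p) > 0"
  using alpha_pos parent_not_leaf leaf_less parent_less signing_parent by (simp add: pinv_index)

lemma pinv_signed_child: "leaf p \<Longrightarrow> signing (parent p) * signing p * pinv $$ (parent p, p) > 0"
  using alpha_pos parent_not_leaf leaf_less parent_less signing_parent
  by (simp add: pinv_index mult.commute)

lemma pinv_signed_leaves:
  assumes p: "leaf p" and q: "leaf q" and e: "E (parent p) (parent q)"
  shows "signing p * signing q * pinv $$ (p, q) > 0"
  using signing_leaves[OF assms] alpha_pos[OF p] alpha_pos[OF q] weight_pos[OF e] e p q leaf_less
  by (simp add: pinv_index adj_def)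

lemma eigenvector_flip:
  assumes "eigenvector Adj x \<mu>"
  shows "eigenvector Adj (vec n (\<lambda>i. side i * x $ i)) (- \<mu>)"
proof -
  have x: "x \<in> carrier_vec n" and "x \<noteq> 0\<^sub>v n" and eig: "Adj *\<^sub>v x = \<mu> \<cdot>\<^sub>v x"
    using assms Adj_carrier unfolding eigenvector_def by auto
  define y where "y = vec n (\<lambda>i. side i * x $ i)"
  have y: "y \<in> carrier_vec n" unfolding y_def by simp
  have "y \<noteq> 0\<^sub>v n"
  proof
    assume y0: "y = 0\<^sub>v n"
    have "x $ i = 0" if "i < n" for i
    proof -
      have "side i * x $ i = 0" using arg_cong[OF y0, of "\<lambda>v. v $ i"] that by (simp add: y_def)
      then show ?thesis using side_sq[of i] by auto
    qed
    then show False using \<open>x \<noteq> 0\<^sub>v n\<close> x by (metis carrier_vecD eq_vecI index_zero_vec)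
  qed
  moreover have "Adj *\<^sub>v y = (- \<mu>) \<cdot>\<^sub>v y"
  proof (rule eq_vecI)
    fix i assume "i < dim_vec ((- \<mu>) \<cdot>\<^sub>v y)"
    then have i: "i < n" unfolding y_def by simp
    have "(Adj *\<^sub>v y) $ i = (\<Sum>j<n. - side i * (adj i j * x $ j))"
      using Adj_row[OF y i] unfolding y_def
      by (auto simp: adj_def side_edge intro!: sum.cong)
    also have "\<dots> = - side i * (Adj *\<^sub>v x) $ i"
      by (simp add: Adj_row[OF x i] sum_distrib_left)
    also have "\<dots> = ((- \<mu>) \<cdot>\<^sub>v y) $ i" using eig i x unfolding y_def by simp
    finally show "(Adj *\<^sub>v y) $ i = ((- \<mu>) \<cdot>\<^sub>v y) $ i" .
  qed (use y Adj_carrier in simp)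
  ultimately show ?thesis unfolding eigenvector_def y_def using Adj_carrier y by simp
qed

lemma Adj_nonzero: "Adj \<noteq> 0\<^sub>m n n"
proof
  assume zero: "Adj = 0\<^sub>m n n"
  obtain v where v: "v < n" "\<not> leaf v" using in_class_T unfolding class_T_def by blast
  obtain p where p: "leaf p" "parent p = v" using non_leaf_has_child[OF v] .
  have "Adj $$ (p, v) = w p v"
    using Adj_index leaf_less p v leaf_parent by (auto simp: adj_def)
  moreover have "w p v > 0" using weight_pos leaf_parent p by blast
  ultimately show False using zero v leaf_less[OF p(1)] by simp
qed

lemma positive_eigenvalue_exists: "\<exists>\<mu>. eigenvalue Adj \<mu> \<and> \<mu> > 0"
proof -
  obtain \<mu> where "eigenvalue Adj \<mu>" "\<mu> \<noteq> 0"
    using sym_mat_nonzero_eigenvalue[OF sym_mat_Adj Adj_nonzero] by blast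
  then show ?thesis
    using eigenvector_flip unfolding eigenvalue_def
    by (metis neg_0_less_iff_less linorder_neqE_linordered_idom)
qed

lemma psd_shifted_pinv:
  assumes \<tau>: "\<tau> > 0" and below: "\<And>\<mu>. eigenvalue Adj \<mu> \<Longrightarrow> \<mu> > 0 \<Longrightarrow> \<tau> \<le> \<mu>"
  shows "psd_mat n ((1 / \<tau>) \<cdot>\<^sub>m 1\<^sub>m n - pinv)"
proof -
  obtain P Q g where P: "P \<in> carrier_mat n n" and Q: "Q \<in> carrier_mat n n" and PQ: "P * Q = 1\<^sub>m n"
    and AP: "Adj * P = P * mat_diag n g" and eigenvalues: "\<And>i. i < n \<Longrightarrow> eigenvalue Adj (g i)"
    using sym_mat_diagonalizable[OF sym_mat_Adj] by blast
  define X where "X = (1 / \<tau>) \<cdot>\<^sub>m 1\<^sub>m n - pinv"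
  have X: "X \<in> carrier_mat n n" unfolding X_def by (rule minus_carrier_mat[OF pinv_carrier])
  have "sym_mat n X" unfolding X_def by (rule sym_mat_smult_one_minus[OF sym_mat_pinv])
  moreover have "X * P = P * mat_diag n (\<lambda>i. 1 / \<tau> - 1 / g i)"
    unfolding mult_eq_mult_mat_diag_iff[OF X P]
  proof (intro allI impI)
    fix i assume i: "i < n"
    have c: "col P i \<in> carrier_vec n" by (rule col_carrier_vec[OF i P])
    have "Adj *\<^sub>v col P i = g i \<cdot>\<^sub>v col P i"
      using AP i unfolding mult_eq_mult_mat_diag_iff[OF Adj_carrier P] by blast
    then have "pinv *\<^sub>v col P i = (1 / g i) \<cdot>\<^sub>v col P i" by (rule pinv_mult_eigenvector[OF c])
    then have "X *\<^sub>v col P i = (1 / \<tau>) \<cdot>\<^sub>v col P i - (1 / g i) \<cdot>\<^sub>v col P i"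
      unfolding X_def smult_one_minus_mult_mat_vec[OF pinv_carrier c] by simp
    also have "\<dots> = (1 / \<tau> - 1 / g i) \<cdot>\<^sub>v col P i"
      using c by (intro eq_vecI) (simp_all add: left_diff_distrib)
    finally show "X *\<^sub>v col P i = (1 / \<tau> - 1 / g i) \<cdot>\<^sub>v col P i" .
  qed
  moreover have "1 / \<tau> - 1 / g i \<ge> 0" if "i < n" for i
  proof (cases "g i > 0")
    case True
    then have "\<tau> \<le> g i" using below eigenvalues that by blast
    then have "1 / g i \<le> 1 / \<tau>" by (rule divide_left_mono) (use \<tau> True in auto)
    then show ?thesis by simp
  next
    case False
    then have "1 / g i \<le> 0" by simp
    then show ?thesis using \<tau> by (smt (verit) divide_pos_pos)
  qed
  ultimately show ?thesis
    unfolding X_def[symmetric] by (rule sym_mat_psd_if_diagonalizable[OF _ P Q PQ])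
qed

lemma pinv_top_eigenvector_nowhere_zero:
  assumes top: "psd_mat n (\<rho> \<cdot>\<^sub>m 1\<^sub>m n - pinv)"
    and x: "x \<in> carrier_vec n" "x \<noteq> 0\<^sub>v n" and eig: "pinv *\<^sub>v x = \<rho> \<cdot>\<^sub>v x" and i: "i < n"
  shows "x $ i \<noteq> 0"
proof
  assume "x $ i = 0"
  have linked: "x $ b = 0"
    if "a < n" "b < n" "signing a * signing b * pinv $$ (a,b) > 0" "x $ a = 0" for a b
    by (rule signed_perron_eigenvector_zero_propagates
        [OF sym_mat_pinv top abs_signing pinv_signed_nonneg x(1) eig that])
  have edge: "x $ b = 0" if e: "E a b" and "x $ a = 0" for a b
  proof -
    have ab: "a < n" "b < n" using edge_less[OF e] by auto
    consider "leaf a" | "leaf b" | "\<not> leaf a" "\<not> leaf b" by blast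
    then show ?thesis
    proof cases
      case 1
      then have "b = parent a" using leaf_edge_iff e by blast
      then show ?thesis
        using linked[OF ab _ \<open>x $ a = 0\<close>] pinv_signed_parent[OF 1] by simp
    next
      case 2
      then have "a = parent b" using leaf_edge_iff e edge_sym by blast
      then show ?thesis
        using linked[OF ab _ \<open>x $ a = 0\<close>] pinv_signed_child[OF 2] by simp
    next
      case 3
      obtain p where p: "leaf p" "parent p = a" using non_leaf_has_child[OF ab(1) 3(1)] .
      obtain q where q: "leaf q" "parent q = b" using non_leaf_has_child[OF ab(2) 3(2)] .
      have "x $ p = 0"
        using linked[OF ab(1) leaf_less[OF p(1)] _ \<open>x $ a = 0\<close>] pinv_signed_child[OF p(1)] p(2)
        by simp
      then have "x $ q = 0"
        using linked[OF leaf_less[OF p(1)] leaf_less[OF q(1)]] pinv_signed_leaves[OF p(1) q(1)]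
          p q e
        by simp
      then show ?thesis
        using linked[OF leaf_less[OF q(1)] ab(2)] pinv_signed_parent[OF q(1)] q(2) by simp
    qed
  qed
  have "x $ j = 0" if "j < n" for j
    using connected[OF i that] by induct (use \<open>x $ i = 0\<close> edge in auto)
  then have "x = 0\<^sub>v n" using x(1) by (intro eq_vecI) auto
  then show False using x(2) by simp
qed

definition tau :: real where
  "tau = Min {\<mu>. eigenvalue Adj \<mu> \<and> \<mu> > 0}"

lemma tau_smallest_positive_eigenvalue:
  shows "eigenvalue Adj tau" "tau > 0"
    and "\<And>\<mu>. eigenvalue Adj \<mu> \<Longrightarrow> \<mu> > 0 \<Longrightarrow> tau \<le> \<mu>"
proof -
  have finite: "finite {\<mu>. eigenvalue Adj \<mu> \<and> \<mu> > 0}"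
    using finite_eigenvalues[OF Adj_carrier] by (rule finite_subset[rotated]) blast
  have "{\<mu>. eigenvalue Adj \<mu> \<and> \<mu> > 0} \<noteq> {}" using positive_eigenvalue_exists by blast
  with finite have "tau \<in> {\<mu>. eigenvalue Adj \<mu> \<and> \<mu> > 0}" unfolding tau_def by (rule Min_in)
  then show "eigenvalue Adj tau" "tau > 0" by auto
  show "tau \<le> \<mu>" if "eigenvalue Adj \<mu>" "\<mu> > 0" for \<mu>
    unfolding tau_def using Min_le[OF finite] that by blast
qed

text \<open>An eigenvector of \<open>Adj\<close> for \<open>tau\<close> is an eigenvector of \<open>pinv\<close> for its largest
  eigenvalue \<open>1 / tau\<close>.\<close>

lemma tau_eigenvector_nowhere_zero:
  assumes x: "eigenvector Adj x tau" and "i < n"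
  shows "x $ i \<noteq> 0"
proof -
  have x': "x \<in> carrier_vec n" "x \<noteq> 0\<^sub>v n" "Adj *\<^sub>v x = tau \<cdot>\<^sub>v x"
    using x Adj_carrier unfolding eigenvector_def by auto
  show ?thesis
    by (rule pinv_top_eigenvector_nowhere_zero[OF psd_shifted_pinv x'(1,2)
          pinv_mult_eigenvector[OF x'(1,3)]])
      (use tau_smallest_positive_eigenvalue \<open>i < n\<close> in auto)
qed

lemma order_tau_char_poly: "order tau (char_poly Adj) = 1"
proof -
  obtain v where "eigenvector Adj v tau"
    using tau_smallest_positive_eigenvalue(1) unfolding eigenvalue_def by blast
  then show ?thesis
    using sym_mat_simple_eigenvalue[OF sym_mat_Adj _ n_pos] tau_eigenvector_nowhere_zero n_pos
    by blast
qed

end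

theorem corollary3p11:
  fixes n :: nat and E :: "nat \<Rightarrow> nat \<Rightarrow> bool" and w :: "nat \<Rightarrow> nat \<Rightarrow> real"
  assumes "class_T n E"
    and "\<forall>i j. E i j \<longrightarrow> w i j = w j i"
    and "\<forall>i j. E i j \<longrightarrow> w i j > 0"
  shows "let A = adj_matrix n E w; \<tau> = Min {x. eigenvalue A x \<and> x > 0} in
    (\<exists>x. eigenvalue A x \<and> x > 0) \<and>
    order \<tau> (char_poly A) = 1 \<and>
    (\<exists>v. eigenvector A v \<tau> \<and> (\<forall>i<n. v $ i \<noteq> 0))"
proof -
  interpret T_tree n E w using assms by unfold_locales auto
  obtain v where "eigenvector Adj v tau"
    using tau_smallest_positive_eigenvalue(1) unfolding eigenvalue_def by blast
  then show ?thesis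
    using positive_eigenvalue_exists order_tau_char_poly tau_eigenvector_nowhere_zero
    unfolding Let_def tau_def[symmetric] by blast
qed

end
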